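(* Let $X$ be a set, let $\mathcal C\subseteq\mathcal P(X)$ be a family of sets, and let $T:\mathcal C\to\mathcal C$ be an order reversing quasi involution on $\mathcal C$ which respects inclusions. Then there exists an order reversing quasi involution $\hat T:\mathcal P(X)\to\mathcal P(X)$ with $\hat T|_{\mathcal C}=T$.
   Context: $\mathcal P(X)$ is the power set of $X$. For $\mathcal C\subseteq\mathcal P(X)$, a map $T:\mathcal C\to\mathcal C$ is an order reversing quasi involution on $\mathcal C$ if for all $K,L\in\mathcal C$: (i) $K\subseteq TTK$, and (ii) $L\subseteq K$ implies $TK\subseteq TL$ (when $\mathcal C=\mathcal P(X)$ this is an order reversing quasi involution on $\mathcal P(X)$). $T:\mathcal C\to\mathcal C$ respects inclusions if for any $K\in\mathcal C$ and any family $(K_i)_{i\in I}\subseteq\mathcal C$ with $K\subseteq\bigcup_{i\in I}K_i$, one has $TK\supseteq\bigcap_{i\in I}TK_i$. *)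

theory Defs
  imports Main
begin

definition oriqi_on :: "'a set set \<Rightarrow> ('a set \<Rightarrow> 'a set) \<Rightarrow> bool" where
  "oriqi_on C T \<longleftrightarrow>
     (\<forall>K\<in>C. T K \<in> C) \<and>
     (\<forall>K\<in>C. K \<subseteq> T (T K)) \<and>
     (\<forall>K\<in>C. \<forall>L\<in>C. L \<subseteq> K \<longrightarrow> T K \<subseteq> T L)"

text \<open>T respects inclusions on C; intersections of families are taken inside X
  (so the empty intersection is X).\<close>
definition respects_inclusions :: "'a set \<Rightarrow> 'a set set \<Rightarrow> ('a set \<Rightarrow> 'a set) \<Rightarrow> bool" where
  "respects_inclusions X C T \<longleftrightarrow>
     (\<forall>K\<in>C. \<forall>F. F \<subseteq> C \<longrightarrow> K \<subseteq> \<Union>F \<longrightarrow> X \<inter> (\<Inter>L\<in>F. T L) \<subseteq> T K)"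

end

theory Submission
  imports Defs
begin

text \<open>Antitonicity of the extension is immediate, and A \<subseteq> T'(T' A) because a witness
  a \<in> L, y \<in> T L is turned around by T L, as L \<subseteq> T (T L). On C, T K \<subseteq> T' K by taking L = K;
  conversely, if y \<in> T' K then the L \<in> C with y \<in> T L cover K, so respecting inclusions puts
  y into T K.\<close>

definition inclusion_extension :: "'a set \<Rightarrow> 'a set set \<Rightarrow> ('a set \<Rightarrow> 'a set) \<Rightarrow> 'a set \<Rightarrow> 'a set"
  where "inclusion_extension X C T A = X \<inter> (\<Inter>a\<in>A. \<Union>{T L | L. L \<in> C \<and> a \<in> L})"

lemma inclusion_extension_iff:
  "y \<in> inclusion_extension X C T A \<longleftrightarrow> y \<in> X \<and> (\<forall>a\<in>A. \<exists>L\<in>C. a \<in> L \<and> y \<in> T L)"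
  unfolding inclusion_extension_def by blast

lemma oriqi_on_Pow_inclusion_extension:
  assumes "oriqi_on C T"
  shows "oriqi_on (Pow X) (inclusion_extension X C T)"
  unfolding oriqi_on_def
proof (intro conjI ballI impI)
  let ?T = "inclusion_extension X C T"
  fix A assume A: "A \<in> Pow X"
  show "?T A \<in> Pow X"
    unfolding inclusion_extension_def by blast
  have swap: "\<exists>L'\<in>C. y \<in> L' \<and> a \<in> T L'" if "L \<in> C" "a \<in> L" "y \<in> T L" for L a y
  proof
    have "T L \<in> C" "L \<subseteq> T (T L)"
      using assms \<open>L \<in> C\<close> unfolding oriqi_on_def by simp_all
    then show "T L \<in> C" and "y \<in> T L \<and> a \<in> T (T L)"
      using that by auto
  qed
  show "A \<subseteq> ?T (?T A)"
  proof
    fix a assume a: "a \<in> A"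
    have "\<exists>L'\<in>C. y \<in> L' \<and> a \<in> T L'" if "y \<in> ?T A" for y
    proof -
      obtain L where "L \<in> C" "a \<in> L" "y \<in> T L"
        using \<open>y \<in> ?T A\<close> a unfolding inclusion_extension_iff by blast
      then show ?thesis by (rule swap)
    qed
    then show "a \<in> ?T (?T A)"
      using a A by (auto simp: inclusion_extension_iff)
  qed
next
  fix A B :: "'a set" assume "B \<subseteq> A"
  then show "inclusion_extension X C T A \<subseteq> inclusion_extension X C T B"
    unfolding inclusion_extension_def by blast
qed

lemma le_inclusion_extension:
  assumes "K \<in> C" "T K \<subseteq> X"
  shows "T K \<subseteq> inclusion_extension X C T K"
  using assms by (auto simp: inclusion_extension_iff)

lemma inclusion_extension_le:
  assumes "respects_inclusions X C T" "K \<in> C"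
  shows "inclusion_extension X C T K \<subseteq> T K"
proof
  fix y assume y: "y \<in> inclusion_extension X C T K"
  let ?F = "{L \<in> C. y \<in> T L}"
  have "K \<subseteq> \<Union>?F"
    using y by (auto simp: inclusion_extension_iff)
  moreover have "?F \<subseteq> C"
    by blast
  ultimately have "X \<inter> (\<Inter>L\<in>?F. T L) \<subseteq> T K"
    using assms unfolding respects_inclusions_def by simp
  moreover have "y \<in> X \<inter> (\<Inter>L\<in>?F. T L)"
    using y by (auto simp: inclusion_extension_iff)
  ultimately show "y \<in> T K" by blast
qed

theorem theorem1p6:
  fixes X :: "'a set" and C :: "'a set set" and T :: "'a set \<Rightarrow> 'a set"
  assumes "C \<subseteq> Pow X"
    and "oriqi_on C T"
    and "respects_inclusions X C T"
  shows "\<exists>T'. oriqi_on (Pow X) T' \<and> (\<forall>K\<in>C. T' K = T K)"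
proof (intro exI conjI ballI)
  show "oriqi_on (Pow X) (inclusion_extension X C T)"
    using assms(2) by (rule oriqi_on_Pow_inclusion_extension)
  fix K assume K: "K \<in> C"
  have "T K \<in> C"
    using assms(2) K unfolding oriqi_on_def by simp
  with assms(1) have "T K \<subseteq> X"
    by blast
  then show "inclusion_extension X C T K = T K"
    using K assms(3) by (intro antisym inclusion_extension_le le_inclusion_extension)
qed

end
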